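(* Let $P$ be a set of $n$ points in the plane in convex position, let $S$ be an optimal dominating set of $G(P)$, and let $\phi:\mathcal{A}\rightarrow S$ be an assignment (for some partition $\mathcal{A}$ of $P$) satisfying: (1) $\phi$ is line separable; (2) each center $p\in S$ is assigned at most two sublists, one of which contains $p$; (3) for any center $p_i$ that is assigned a second sublist $\beta_i$ (not containing $p_i$), there exist $p_t\in\beta_i$ and centers $q_1,q_2\in S$ with $q_1\in P(i,t)$, $q_2\in P(t,i)$, $p_t\notin D_{q_1}$, $p_t\notin D_{q_2}$. Then there exists a pair of centers $(p_i,p_j)$ in $S$ (a decoupling pair) such that: (a) each of $p_i$ and $p_j$ is assigned only one sublist; (b) for any center of $S$ that is assigned two sublists, one of them is contained in $P(i,j)$ and the other in $P(j,i)$.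
   Context: $P$ is in convex position (every point is a hull vertex), no three points collinear, no four cocircular; $P$ is the cyclic list $\langle p_1,\dots,p_n\rangle$ counterclockwise along the hull. A sublist is a contiguous subsequence of the cyclic list. $P[i,j]$ is the sublist from $p_i$ counterclockwise to $p_j$ inclusive; $P(i,j)$ excludes $p_i,p_j$. $D_p$ is the closed unit disk centered at $p$. $G(P)$ has an edge between two points of $P$ iff their distance is at most $1$. A dominating set $S\subseteq P$: every point of $P$ is in $S$ or within distance $1$ of a point of $S$; its points are centers. Optimal dominating set: the points carry positive weights and $S$ is a dominating set of minimum total weight (unit weights give the minimum-cardinality case). A partition $\mathcal{A}$ of $P$ is a partition of the cyclic list into consecutive nonempty disjoint sublists. An assignment $\phi:\mathcal{A}\to S$ maps each sublist $\alpha$ to one center $p$ with $\alpha\subseteq D_p$; the group of $p$ is the set of points in sublists assigned to $p$. $\phi$ is line separable if for every two distinct centers some line has the points of one group on one side or on the line and those of the other group strictly on the other side. *)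

theory Defs
  imports "HOL-Analysis.Analysis"
begin

text \<open>Points of the plane are vectors in real^2. The point set P is given by
  n and an indexing p 0, ..., p (n-1), counterclockwise along the convex hull.
  Sublists and sets of centers are represented by sets of indices in {..<n}.\<close>

definition orient :: "real^2 \<Rightarrow> real^2 \<Rightarrow> real^2 \<Rightarrow> real" where
  "orient a b c = (b$1 - a$1) * (c$2 - a$2) - (b$2 - a$2) * (c$1 - a$1)"

definition convex_ccw :: "nat \<Rightarrow> (nat \<Rightarrow> real^2) \<Rightarrow> bool" where
  "convex_ccw n p \<longleftrightarrow>
     inj_on p {..<n} \<and>
     (\<forall>i<n. p i \<notin> convex hull (p ` ({..<n} - {i}))) \<and>
     (\<forall>i<n. \<forall>j<n. \<forall>k<n. i \<noteq> j \<and> j \<noteq> k \<and> i \<noteq> k \<longrightarrow> orient (p i) (p j) (p k) \<noteq> 0) \<and>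
     (\<forall>i<n. \<forall>j<n. \<forall>k<n. \<forall>l<n. distinct [i, j, k, l] \<longrightarrow>
        \<not> (\<exists>c r. dist (p i) c = r \<and> dist (p j) c = r \<and> dist (p k) c = r \<and> dist (p l) c = r)) \<and>
     (\<forall>i<n. \<forall>k<n. k \<noteq> i \<and> k \<noteq> (i + 1) mod n \<longrightarrow>
        orient (p i) (p ((i + 1) mod n)) (p k) > 0)"

text \<open>P[i,j]: indices from i counterclockwise to j, inclusive.\<close>
definition cyc_closed :: "nat \<Rightarrow> nat \<Rightarrow> nat \<Rightarrow> nat set" where
  "cyc_closed n i j = {(i + m) mod n | m. m \<le> (j + n - i) mod n}"

text \<open>P(i,j): indices strictly between i and j counterclockwise (i, j excluded).\<close>
definition cyc_open :: "nat \<Rightarrow> nat \<Rightarrow> nat \<Rightarrow> nat set" where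
  "cyc_open n i j = {(i + m) mod n | m. 0 < m \<and> m < (j + n - i) mod n}"

definition sublist_idx :: "nat \<Rightarrow> nat set \<Rightarrow> bool" where
  "sublist_idx n A \<longleftrightarrow> (\<exists>i<n. \<exists>j<n. A = cyc_closed n i j)"

definition cyc_partition :: "nat \<Rightarrow> nat set set \<Rightarrow> bool" where
  "cyc_partition n \<A> \<longleftrightarrow>
     (\<forall>A\<in>\<A>. sublist_idx n A) \<and>
     (\<forall>A\<in>\<A>. \<forall>B\<in>\<A>. A \<noteq> B \<longrightarrow> A \<inter> B = {}) \<and>
     \<Union>\<A> = {..<n}"

text \<open>Edges of G(P): distance at most 1.\<close>
definition dominating :: "nat \<Rightarrow> (nat \<Rightarrow> real^2) \<Rightarrow> nat set \<Rightarrow> bool" where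
  "dominating n p S \<longleftrightarrow> S \<subseteq> {..<n} \<and>
     (\<forall>k<n. k \<in> S \<or> (\<exists>s\<in>S. dist (p k) (p s) \<le> 1))"

definition optimal_dominating ::
  "nat \<Rightarrow> (nat \<Rightarrow> real^2) \<Rightarrow> (nat \<Rightarrow> real) \<Rightarrow> nat set \<Rightarrow> bool" where
  "optimal_dominating n p w S \<longleftrightarrow> dominating n p S \<and>
     (\<forall>T. dominating n p T \<longrightarrow> sum w S \<le> sum w T)"

definition assignment ::
  "nat \<Rightarrow> (nat \<Rightarrow> real^2) \<Rightarrow> nat set \<Rightarrow> nat set set \<Rightarrow> (nat set \<Rightarrow> nat) \<Rightarrow> bool" where
  "assignment n p S \<A> \<phi> \<longleftrightarrow> cyc_partition n \<A> \<and>
     (\<forall>A\<in>\<A>. \<phi> A \<in> S \<and> (\<forall>k\<in>A. dist (p k) (p (\<phi> A)) \<le> 1))"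

definition group_of :: "nat set set \<Rightarrow> (nat set \<Rightarrow> nat) \<Rightarrow> nat \<Rightarrow> nat set" where
  "group_of \<A> \<phi> c = \<Union>{A\<in>\<A>. \<phi> A = c}"

definition line_separable ::
  "(nat \<Rightarrow> real^2) \<Rightarrow> nat set \<Rightarrow> nat set set \<Rightarrow> (nat set \<Rightarrow> nat) \<Rightarrow> bool" where
  "line_separable p S \<A> \<phi> \<longleftrightarrow>
     (\<forall>c\<in>S. \<forall>d\<in>S. c \<noteq> d \<longrightarrow>
        (\<exists>a::real^2. \<exists>b::real. a \<noteq> 0 \<and>
           (((\<forall>k\<in>group_of \<A> \<phi> c. a \<bullet> p k \<le> b) \<and> (\<forall>k\<in>group_of \<A> \<phi> d. a \<bullet> p k > b)) \<or>
            ((\<forall>k\<in>group_of \<A> \<phi> d. a \<bullet> p k \<le> b) \<and> (\<forall>k\<in>group_of \<A> \<phi> c. a \<bullet> p k > b)))))"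

definition n_assigned :: "nat set set \<Rightarrow> (nat set \<Rightarrow> nat) \<Rightarrow> nat \<Rightarrow> nat" where
  "n_assigned \<A> \<phi> c = card {A\<in>\<A>. \<phi> A = c}"

end

theory Submission
  imports Defs
begin

text \<open>
  A center c with two sublists has, by condition (3), a point t of its second sublist such that
  each side of the chord c t contains a center far from t.  By line separability, groups of
  distinct centers never interleave along the hull; hence chords of distinct centers do not cross,
  and each side of a chord also contains a private neighbour of that center (which exists by
  optimality) far from c.  So each side is a fat cap: its endpoints are at distance at most 1
  while it contains points far from either endpoint.  For a fat cap there is a cone of opening
  below 60 degrees of directions in which the extreme point of P lies in the cap, so the cones of
  disjoint caps point more than 120 degrees apart and no three caps are pairwise disjoint.

  Now let i be a center on a shortest chord side; it has a single sublist.  The sides of the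
  chords away from i avoid that shortest side, hence pairwise intersect and, as they do not
  cross, form a chain.  A center j on the smallest one has a single sublist, and every chord
  separates i from j.
\<close>

section \<open>Cyclic order of indices\<close>

definition cyc_dist :: "nat \<Rightarrow> nat \<Rightarrow> nat \<Rightarrow> nat" where
  "cyc_dist n a b = (b + n - a) mod n"

lemma mod_less_double: "(x::nat) < 2 * n \<Longrightarrow> x mod n = (if x < n then x else x - n)"
  by (simp add: mod_if)

lemma cyc_dist_eq: "a < n \<Longrightarrow> b < n \<Longrightarrow> cyc_dist n a b = (if a \<le> b then b - a else b + n - a)"
  unfolding cyc_dist_def by (subst mod_less_double) auto

lemma cyc_dist_less: "a < n \<Longrightarrow> b < n \<Longrightarrow> cyc_dist n a b < n"
  by (simp add: cyc_dist_eq; linarith)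

lemma cyc_dist_self: "cyc_dist n a a = 0"
  by (simp add: cyc_dist_def)

lemma cyc_dist_pos: "a < n \<Longrightarrow> b < n \<Longrightarrow> a \<noteq> b \<Longrightarrow> 0 < cyc_dist n a b"
  by (simp add: cyc_dist_eq; linarith)

lemma add_cyc_dist_mod: "a < n \<Longrightarrow> b < n \<Longrightarrow> (a + cyc_dist n a b) mod n = b"
  by (simp add: cyc_dist_eq mod_less_double)

lemma cyc_dist_add_mod: "a < n \<Longrightarrow> m < n \<Longrightarrow> cyc_dist n a ((a + m) mod n) = m"
  by (auto simp: cyc_dist_eq mod_less_double)

lemma cyc_dist_inj: "a < n \<Longrightarrow> b < n \<Longrightarrow> c < n \<Longrightarrow> cyc_dist n a b = cyc_dist n a c \<Longrightarrow> b = c"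
  using add_cyc_dist_mod by metis

lemma cyc_dist_split: "x < n \<Longrightarrow> y < n \<Longrightarrow> z < n \<Longrightarrow>
   cyc_dist n x z = cyc_dist n x y + cyc_dist n y z \<or> cyc_dist n x z + n = cyc_dist n x y + cyc_dist n y z"
  by (simp add: cyc_dist_eq; linarith)

lemma cyc_dist_sym: "x < n \<Longrightarrow> y < n \<Longrightarrow> x \<noteq> y \<Longrightarrow> cyc_dist n x y + cyc_dist n y x = n"
  by (simp add: cyc_dist_eq; linarith)

lemma mem_cyc_open_iff:
  assumes "i < n" "j < n"
  shows "k \<in> cyc_open n i j \<longleftrightarrow> k < n \<and> 0 < cyc_dist n i k \<and> cyc_dist n i k < cyc_dist n i j"
proof
  assume "k \<in> cyc_open n i j"
  then obtain m where k: "k = (i + m) mod n" "0 < m" "m < cyc_dist n i j"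
    unfolding cyc_open_def cyc_dist_def by auto
  moreover have "m < n" using k(3) cyc_dist_less[OF assms] by linarith
  ultimately show "k < n \<and> 0 < cyc_dist n i k \<and> cyc_dist n i k < cyc_dist n i j"
    using assms cyc_dist_add_mod[of i n m] by auto
next
  assume "k < n \<and> 0 < cyc_dist n i k \<and> cyc_dist n i k < cyc_dist n i j"
  then show "k \<in> cyc_open n i j"
    using add_cyc_dist_mod[of i n k] assms unfolding cyc_open_def cyc_dist_def[symmetric] by force
qed

lemma mem_cyc_closed_iff:
  assumes "i < n" "j < n"
  shows "k \<in> cyc_closed n i j \<longleftrightarrow> k < n \<and> cyc_dist n i k \<le> cyc_dist n i j"
proof
  assume "k \<in> cyc_closed n i j"
  then obtain m where k: "k = (i + m) mod n" "m \<le> cyc_dist n i j"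
    unfolding cyc_closed_def cyc_dist_def by auto
  moreover have "m < n" using k(2) cyc_dist_less[OF assms] by linarith
  ultimately show "k < n \<and> cyc_dist n i k \<le> cyc_dist n i j"
    using assms cyc_dist_add_mod[of i n m] by auto
next
  assume "k < n \<and> cyc_dist n i k \<le> cyc_dist n i j"
  then show "k \<in> cyc_closed n i j"
    using add_cyc_dist_mod[of i n k] assms unfolding cyc_closed_def cyc_dist_def[symmetric] by force
qed

lemma finite_cyc_open: "finite (cyc_open n x y)"
proof -
  have "cyc_open n x y \<subseteq> (\<lambda>m. (x + m) mod n) ` {..< (y + n - x) mod n}"
    unfolding cyc_open_def by auto
  then show ?thesis using finite_subset by blast
qed

definition cyc_order3 :: "nat \<Rightarrow> nat \<Rightarrow> nat \<Rightarrow> nat \<Rightarrow> bool" where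
  "cyc_order3 n a b c \<longleftrightarrow> a < n \<and> b < n \<and> c < n \<and> 0 < cyc_dist n a b \<and> cyc_dist n a b < cyc_dist n a c"

definition cyc_order4 :: "nat \<Rightarrow> nat \<Rightarrow> nat \<Rightarrow> nat \<Rightarrow> nat \<Rightarrow> bool" where
  "cyc_order4 n a b c d \<longleftrightarrow> a < n \<and> b < n \<and> c < n \<and> d < n \<and>
     0 < cyc_dist n a b \<and> cyc_dist n a b < cyc_dist n a c \<and> cyc_dist n a c < cyc_dist n a d"

lemma cyc_order3_rotate: "cyc_order3 n a b c \<Longrightarrow> cyc_order3 n b c a"
  unfolding cyc_order3_def by (auto simp: cyc_dist_eq split: if_splits)

lemma cyc_order4_rotate: "cyc_order4 n a b c d \<Longrightarrow> cyc_order4 n b c d a"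
  unfolding cyc_order4_def by (auto simp: cyc_dist_eq split: if_splits)

lemma cyc_order4_D:
  assumes "cyc_order4 n a b c d"
  shows "cyc_order3 n a b c" "cyc_order3 n a b d" "cyc_order3 n a c d" "cyc_order3 n b c d"
proof -
  show "cyc_order3 n a b c" "cyc_order3 n a b d" "cyc_order3 n a c d"
    using assms unfolding cyc_order4_def cyc_order3_def by auto
  show "cyc_order3 n b c d"
    using cyc_order4_rotate[OF assms] unfolding cyc_order4_def cyc_order3_def by auto
qed

lemma cyc_open_cases:
  assumes "x < n" "y < n" "k < n" "x \<noteq> y"
  shows "k = x \<or> k = y \<or> k \<in> cyc_open n x y \<or> k \<in> cyc_open n y x"
proof (rule ccontr)
  assume c: "\<not> ?thesis"
  then have "k \<noteq> x" "k \<noteq> y" by auto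
  then have "0 < cyc_dist n x k" "cyc_dist n x k \<noteq> cyc_dist n x y" "0 < cyc_dist n y k"
    using cyc_dist_pos cyc_dist_inj assms by metis+
  moreover have "cyc_dist n y k < n" "cyc_dist n x k < n" using cyc_dist_less assms by auto
  moreover have "cyc_dist n x y + cyc_dist n y x = n" using cyc_dist_sym assms by auto
  moreover have "cyc_dist n y k = cyc_dist n y x + cyc_dist n x k \<or>
      cyc_dist n y k + n = cyc_dist n y x + cyc_dist n x k"
    using cyc_dist_split assms by blast
  ultimately show False
    using c assms unfolding mem_cyc_open_iff[OF assms(1,2)] mem_cyc_open_iff[OF assms(2,1)]
    by (elim disjE; linarith)
qed

lemma cyc_open_endpoints:
  assumes "x < n" "y < n"
  shows "x \<notin> cyc_open n x y" "y \<notin> cyc_open n x y"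
  using assms unfolding mem_cyc_open_iff[OF assms] by (auto simp: cyc_dist_self)

lemma cyc_open_disjoint:
  assumes "x < n" "y < n"
  shows "cyc_open n x y \<inter> cyc_open n y x = {}"
proof (cases "x = y")
  case True
  then show ?thesis using assms by (auto simp: mem_cyc_open_iff cyc_dist_self)
next
  case False
  have False if "k \<in> cyc_open n x y" "k \<in> cyc_open n y x" for k
  proof -
    have k: "k < n" using that mem_cyc_open_iff assms by blast
    have "cyc_dist n y k < n" "cyc_dist n x k < n" using cyc_dist_less assms k by auto
    moreover have "cyc_dist n x y + cyc_dist n y x = n" using cyc_dist_sym assms False by auto
    moreover have "cyc_dist n y k = cyc_dist n y x + cyc_dist n x k \<or>
        cyc_dist n y k + n = cyc_dist n y x + cyc_dist n x k"
      using cyc_dist_split assms k by blast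
    ultimately show False
      using that unfolding mem_cyc_open_iff[OF assms(1,2)] mem_cyc_open_iff[OF assms(2,1)]
      by (elim disjE; linarith)
  qed
  then show ?thesis by blast
qed

lemma cyc_order4_of_cyc_open:
  assumes "x < n" "y < n" "a \<in> cyc_open n x y" "b \<in> cyc_open n y x"
  shows "cyc_order4 n x a y b"
proof -
  have "x \<noteq> y" using assms(3) cyc_open_disjoint[OF assms(1,2)] assms(4) by auto
  then have "cyc_dist n x y + cyc_dist n y x = n" using cyc_dist_sym assms by auto
  moreover have ab: "a < n" "b < n" using assms mem_cyc_open_iff by blast+
  moreover have "cyc_dist n y b < n" "cyc_dist n x b < n" using cyc_dist_less assms ab by auto
  moreover have "cyc_dist n x b = cyc_dist n x y + cyc_dist n y b \<or>
      cyc_dist n x b + n = cyc_dist n x y + cyc_dist n y b"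
    using cyc_dist_split assms ab by blast
  ultimately show ?thesis
    using assms(3,4) assms(1,2)
    unfolding mem_cyc_open_iff[OF assms(1,2)] mem_cyc_open_iff[OF assms(2,1)] cyc_order4_def
    by (elim disjE; linarith)
qed

lemma cyc_open_of_cyc_order4:
  assumes "cyc_order4 n a b c d"
  shows "b \<in> cyc_open n a c" "d \<in> cyc_open n c a"
proof -
  have n: "a < n" "c < n" using assms unfolding cyc_order4_def by auto
  show "b \<in> cyc_open n a c" using assms unfolding mem_cyc_open_iff[OF n] cyc_order4_def by auto
  show "d \<in> cyc_open n c a"
    using cyc_order4_rotate[OF cyc_order4_rotate[OF assms]]
    unfolding mem_cyc_open_iff[OF n(2,1)] cyc_order4_def by auto
qed

lemma cyc_open_sub_arc_ordered:
  assumes "x < n" "y < n" "a \<in> cyc_open n x y" "b \<in> cyc_open n x y"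
    and "cyc_dist n x a < cyc_dist n x b"
  shows "cyc_open n a b \<subseteq> cyc_open n x y"
proof
  fix k assume kab: "k \<in> cyc_open n a b"
  have ab: "a < n" "b < n" using assms(3,4) mem_cyc_open_iff[OF assms(1,2)] by auto
  have k: "k < n" using kab mem_cyc_open_iff ab by blast
  have oa: "0 < cyc_dist n x a" "cyc_dist n x b < cyc_dist n x y"
    using assms(3,4) mem_cyc_open_iff[OF assms(1,2)] by auto
  have l: "cyc_dist n a b < n" "cyc_dist n x k < n" "cyc_dist n x b < n"
    using cyc_dist_less assms ab k by auto
  have ka: "0 < cyc_dist n a k" "cyc_dist n a k < cyc_dist n a b"
    using kab mem_cyc_open_iff[OF ab] by auto
  have "cyc_dist n x b = cyc_dist n x a + cyc_dist n a b \<or>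
      cyc_dist n x b + n = cyc_dist n x a + cyc_dist n a b"
    using cyc_dist_split assms ab by blast
  then have e2: "cyc_dist n x b = cyc_dist n x a + cyc_dist n a b" using assms(5) l by linarith
  have "cyc_dist n x k = cyc_dist n x a + cyc_dist n a k \<or>
      cyc_dist n x k + n = cyc_dist n x a + cyc_dist n a k"
    using cyc_dist_split assms ab k by blast
  then have "cyc_dist n x k = cyc_dist n x a + cyc_dist n a k" using e2 ka oa l by linarith
  then have "0 < cyc_dist n x k" "cyc_dist n x k < cyc_dist n x y" using e2 ka oa by linarith+
  then show "k \<in> cyc_open n x y" using k mem_cyc_open_iff[OF assms(1,2)] by blast
qed

lemma cyc_open_sub_arc:
  assumes "x < n" "y < n" "a \<in> cyc_open n x y" "b \<in> cyc_open n x y" "a \<noteq> b"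
  shows "cyc_open n a b \<subseteq> cyc_open n x y \<or> cyc_open n b a \<subseteq> cyc_open n x y"
proof -
  have "a < n" "b < n" using assms(3,4) mem_cyc_open_iff[OF assms(1,2)] by auto
  then have "cyc_dist n x a < cyc_dist n x b \<or> cyc_dist n x b < cyc_dist n x a"
    using assms(5) cyc_dist_inj[of x n a b] assms(1) by fastforce
  then show ?thesis using cyc_open_sub_arc_ordered[OF assms(1,2)] assms(3,4) by blast
qed

lemma cyc_closed_subset_cyc_open:
  assumes "i < n" "j < n" "s < n" "e < n"
    and "i \<notin> cyc_closed n s e" "j \<notin> cyc_closed n s e"
    and "z \<in> cyc_closed n s e" "z \<in> cyc_open n i j"
  shows "cyc_closed n s e \<subseteq> cyc_open n i j"
proof
  fix k assume "k \<in> cyc_closed n s e"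
  then have k: "k < n" and f1: "cyc_dist n s k \<le> cyc_dist n s e"
    using mem_cyc_closed_iff[OF assms(3,4)] by auto
  have z: "z < n" and f2: "cyc_dist n s z \<le> cyc_dist n s e"
    using assms(7) mem_cyc_closed_iff[OF assms(3,4)] by auto
  have f3: "\<not> cyc_dist n s i \<le> cyc_dist n s e" and f4: "\<not> cyc_dist n s j \<le> cyc_dist n s e"
    using assms(1,2,5,6) mem_cyc_closed_iff[OF assms(3,4)] by auto
  then have si: "s \<noteq> i" by (auto simp: cyc_dist_self)
  have s: "cyc_dist n s i + cyc_dist n i s = n" using cyc_dist_sym assms si by auto
  have l: "cyc_dist n s j < n" "cyc_dist n i k < n" "cyc_dist n i j < n" "cyc_dist n i z < n"
    using cyc_dist_less assms z k by auto
  have g: "0 < cyc_dist n i z" "cyc_dist n i z < cyc_dist n i j"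
    using assms(8) mem_cyc_open_iff[OF assms(1,2)] by auto
  have "cyc_dist n i z = cyc_dist n i s + cyc_dist n s z \<or>
      cyc_dist n i z + n = cyc_dist n i s + cyc_dist n s z"
    using cyc_dist_split assms z by blast
  then have e2: "cyc_dist n i z = cyc_dist n i s + cyc_dist n s z" using f2 f3 s l by linarith
  have "cyc_dist n i j = cyc_dist n i s + cyc_dist n s j \<or>
      cyc_dist n i j + n = cyc_dist n i s + cyc_dist n s j"
    using cyc_dist_split assms by blast
  then have e3: "cyc_dist n i j = cyc_dist n i s + cyc_dist n s j" using l e2 g by linarith
  have "cyc_dist n i k = cyc_dist n i s + cyc_dist n s k \<or>
      cyc_dist n i k + n = cyc_dist n i s + cyc_dist n s k"
    using cyc_dist_split assms k by blast
  then have "cyc_dist n i k = cyc_dist n i s + cyc_dist n s k" using f1 f3 s l by linarith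
  moreover have "0 < cyc_dist n i s" using cyc_dist_pos assms si by metis
  ultimately have "0 < cyc_dist n i k" "cyc_dist n i k < cyc_dist n i j" using e3 f1 f4 by linarith+
  then show "k \<in> cyc_open n i j" using k mem_cyc_open_iff[OF assms(1,2)] by blast
qed

section \<open>Orientation of points in convex position\<close>

lemma orient_rotate: "orient a b c = orient b c a"
  unfolding orient_def by (simp add: algebra_simps)

lemma orient_pluecker:
  "orient A B Z * orient A Y W = orient A B Y * orient A Z W + orient A B W * orient A Y Z"
  unfolding orient_def by (simp add: algebra_simps)

lemma convex_ccw_edge:
  assumes "convex_ccw n p" "i < n" "k < n" "k \<noteq> i" "k \<noteq> (i + 1) mod n"
  shows "orient (p i) (p ((i + 1) mod n)) (p k) > 0"
  using assms unfolding convex_ccw_def by blast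

lemma orient_fan_step:
  assumes "convex_ccw n p" "a < n" "0 < k" "Suc k < n"
  shows "orient (p a) (p ((a + k) mod n)) (p ((a + Suc k) mod n)) > 0"
proof -
  let ?i = "(a + k) mod n"
  have i: "?i < n" using assms by simp
  have e: "(?i + 1) mod n = (a + Suc k) mod n" by (simp add: mod_Suc_eq)
  have "cyc_dist n a ?i = k" using cyc_dist_add_mod[of a n k] assms by simp
  moreover have "cyc_dist n a ((a + Suc k) mod n) = Suc k"
    using cyc_dist_add_mod[of a n "Suc k"] assms by simp
  ultimately have "a \<noteq> ?i" "a \<noteq> (a + Suc k) mod n" using assms by (auto simp: cyc_dist_self)
  then have "orient (p ?i) (p ((?i + 1) mod n)) (p a) > 0"
    using convex_ccw_edge[OF assms(1) i assms(2)] e by auto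
  then show ?thesis using e orient_rotate by metis
qed

lemma orient_fan_first:
  assumes "convex_ccw n p" "a < n" "1 < k" "k < n"
  shows "orient (p a) (p ((a + 1) mod n)) (p ((a + k) mod n)) > 0"
proof -
  have "cyc_dist n a ((a + k) mod n) = k" using cyc_dist_add_mod[of a n k] assms by simp
  moreover have "cyc_dist n a ((a + 1) mod n) = 1" using cyc_dist_add_mod[of a n 1] assms by simp
  ultimately have "(a + k) mod n \<noteq> a" "(a + k) mod n \<noteq> (a + 1) mod n"
    using assms by (auto simp: cyc_dist_self)
  then show ?thesis using convex_ccw_edge[OF assms(1,2)] assms by simp
qed

text \<open>The induction step uses the Pluecker-type identity, pivoting on the successor of a.\<close>
lemma orient_fan:
  assumes P: "convex_ccw n p" and a: "a < n" and st: "0 < s" "s < t" "t < n"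
  shows "orient (p a) (p ((a + s) mod n)) (p ((a + t) mod n)) > 0"
  using st(2,3)
proof (induction t)
  case 0
  then show ?case by simp
next
  case (Suc t)
  consider "s = t" | "s = 1" "s < t" | "1 < s" "s < t" using Suc.prems st(1) by linarith
  then show ?case
  proof cases
    case 1
    then show ?thesis using orient_fan_step[OF P a st(1)] Suc.prems by simp
  next
    case 2
    then show ?thesis using orient_fan_first[OF P a, of "Suc t"] Suc.prems by simp
  next
    case 3
    let ?o = "\<lambda>k l. orient (p a) (p ((a + k) mod n)) (p ((a + l) mod n))"
    have IH: "?o s t > 0" using Suc 3 by simp
    have "?o 1 t > 0" "?o 1 s > 0" using orient_fan_first[OF P a] 3 Suc.prems by simp_all
    moreover have "?o 1 (Suc t) > 0" using orient_fan_first[OF P a, of "Suc t"] 3 Suc.prems by simp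
    moreover have "?o t (Suc t) > 0" using orient_fan_step[OF P a] 3 Suc.prems by simp
    ultimately have "?o 1 t * ?o s (Suc t) > 0"
      using orient_pluecker[of "p a" "p ((a + 1) mod n)" "p ((a + t) mod n)" "p ((a + s) mod n)"
          "p ((a + Suc t) mod n)"] IH
      by (simp add: add_pos_pos)
    then show ?thesis using \<open>?o 1 t > 0\<close> zero_less_mult_pos by blast
  qed
qed

lemma convex_ccw_orient_pos:
  assumes "convex_ccw n p" "cyc_order3 n a b c"
  shows "orient (p a) (p b) (p c) > 0"
proof -
  have a: "a < n" "b < n" "c < n" "0 < cyc_dist n a b" "cyc_dist n a b < cyc_dist n a c"
    using assms(2) unfolding cyc_order3_def by auto
  then have "orient (p a) (p ((a + cyc_dist n a b) mod n)) (p ((a + cyc_dist n a c) mod n)) > 0"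
    using orient_fan[OF assms(1) a(1,4,5)] cyc_dist_less by simp
  then show ?thesis using add_cyc_dist_mod a by simp
qed

lemma inner_vec2: "(x::real^2) \<bullet> y = x$1 * y$1 + x$2 * y$2"
  by (simp add: inner_vec_def sum_2)

lemma orient_inner_identity:
  "orient B C D * (e \<bullet> A) + orient A B D * (e \<bullet> C) =
   orient A C D * (e \<bullet> B) + orient A B C * (e \<bullet> (D::real^2))"
  unfolding orient_def inner_vec2 by (simp add: algebra_simps)

lemma orient_sum_identity: "orient B C D + orient A B D = orient A C D + orient A B C"
  unfolding orient_def by (simp add: algebra_simps)

text \<open>Both sides of the identity are positive combinations (with equal total weight) of
  the values of the functional at a, c and at b, d respectively.\<close>
lemma cyc_order4_not_separated:
  assumes "convex_ccw n p" "cyc_order4 n a b c d"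
  shows "\<not> max (e \<bullet> p a) (e \<bullet> p c) < min (e \<bullet> p b) (e \<bullet> p d)"
proof
  define M where "M = max (e \<bullet> p a) (e \<bullet> p c)"
  define N where "N = min (e \<bullet> p b) (e \<bullet> p d)"
  assume "max (e \<bullet> p a) (e \<bullet> p c) < min (e \<bullet> p b) (e \<bullet> p d)"
  then have MN: "M < N" by (simp add: M_def N_def)
  have o: "orient (p b) (p c) (p d) > 0" "orient (p a) (p b) (p d) > 0"
    "orient (p a) (p c) (p d) > 0" "orient (p a) (p b) (p c) > 0"
    using convex_ccw_orient_pos[OF assms(1)] cyc_order4_D[OF assms(2)] by blast+
  have "orient (p b) (p c) (p d) * (e \<bullet> p a) \<le> orient (p b) (p c) (p d) * M"
    "orient (p a) (p b) (p d) * (e \<bullet> p c) \<le> orient (p a) (p b) (p d) * M"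
    "orient (p a) (p c) (p d) * N \<le> orient (p a) (p c) (p d) * (e \<bullet> p b)"
    "orient (p a) (p b) (p c) * N \<le> orient (p a) (p b) (p c) * (e \<bullet> p d)"
    using o by (simp_all add: mult_left_mono M_def N_def)
  moreover have "(orient (p a) (p c) (p d) + orient (p a) (p b) (p c)) * M <
     (orient (p a) (p c) (p d) + orient (p a) (p b) (p c)) * N"
    using o MN by (intro mult_strict_left_mono) auto
  moreover have "M * (orient (p b) (p c) (p d) + orient (p a) (p b) (p d)) =
      M * (orient (p a) (p c) (p d) + orient (p a) (p b) (p c))"
    using orient_sum_identity[of "p b" "p c" "p d" "p a"] by simp
  ultimately show False
    using orient_inner_identity[of "p b" "p c" "p d" e "p a"] by (simp add: algebra_simps)
qed

section \<open>Extreme cones\<close>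

text \<open>The opening of less than 60 degrees (g \<bullet> h > 1/2) is what forces the cones of disjoint
  sets to point more than 120 degrees apart.\<close>
definition extreme_cone :: "nat \<Rightarrow> (nat \<Rightarrow> real^2) \<Rightarrow> nat set \<Rightarrow> real^2 \<Rightarrow> real^2 \<Rightarrow> bool" where
  "extreme_cone n p Q g h \<longleftrightarrow> Q \<subseteq> {..<n} \<and> norm g = 1 \<and> norm h = 1 \<and> g \<bullet> h > 1/2 \<and>
     (\<forall>d. d \<bullet> g > 0 \<and> d \<bullet> h > 0 \<longrightarrow> (\<exists>z\<in>Q. \<forall>k<n. k \<notin> Q \<longrightarrow> d \<bullet> p k < d \<bullet> p z))"

definition bisector :: "'a::real_normed_vector \<Rightarrow> 'a \<Rightarrow> 'a" where
  "bisector g h = (1 / norm (g + h)) *\<^sub>R (g + h)"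

lemma norm_add_unit_sq:
  fixes g h :: "'a::real_inner"
  assumes "norm g = 1" "norm h = 1"
  shows "(norm (g + h))\<^sup>2 = 2 + 2 * (g \<bullet> h)"
proof -
  have "g \<bullet> g = 1" "h \<bullet> h = 1" using assms by (simp_all add: dot_square_norm)
  then show ?thesis
    by (simp add: power2_norm_eq_inner inner_add_left inner_add_right inner_commute)
qed

lemma bisector_unit:
  fixes g h :: "'a::real_inner"
  assumes "norm g = 1" "norm h = 1" "g \<bullet> h > -1"
  shows "norm (bisector g h) = 1" "g + h = norm (g + h) *\<^sub>R bisector g h" "norm (g + h) > 0"
proof -
  have "(norm (g + h))\<^sup>2 > 0" using norm_add_unit_sq[OF assms(1,2)] assms(3) by simp
  then show pos: "norm (g + h) > 0" by (simp add: zero_less_power2)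
  then show "norm (bisector g h) = 1" "g + h = norm (g + h) *\<^sub>R bisector g h"
    unfolding bisector_def by simp_all
qed

lemma inner_pos_near_bisector:
  fixes g h d :: "'a::real_inner"
  assumes g: "norm g = 1" and h: "norm h = 1" and gh: "g \<bullet> h > 1/2" and d: "d \<noteq> 0"
    and near: "d \<bullet> (g + h) \<ge> 1/2 * norm d * norm (g + h)"
  shows "d \<bullet> g > 0"
proof (rule ccontr)
  assume "\<not> d \<bullet> g > 0"
  then have dg: "d \<bullet> g \<le> 0" by simp
  define c where "c = g \<bullet> h"
  define N where "N = norm (h - c *\<^sub>R g)"
  have gg: "g \<bullet> g = 1" and hh: "h \<bullet> h = 1" using g h by (simp_all add: dot_square_norm)
  have N2: "N\<^sup>2 = 1 - c\<^sup>2"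
  proof -
    have "N\<^sup>2 = h \<bullet> h - 2 * c * (g \<bullet> h) + c\<^sup>2 * (g \<bullet> g)"
      unfolding N_def dot_square_norm[symmetric]
      by (simp add: inner_diff_left inner_diff_right inner_commute power2_eq_square algebra_simps)
    then show ?thesis using gg hh c_def by (simp add: power2_eq_square)
  qed
  have "d \<bullet> h = d \<bullet> (h - c *\<^sub>R g) + c * (d \<bullet> g)" by (simp add: inner_diff_right)
  moreover have "d \<bullet> (h - c *\<^sub>R g) \<le> norm d * N" unfolding N_def by (rule norm_cauchy_schwarz)
  moreover have "c * (d \<bullet> g) \<le> 0" using dg gh c_def by (simp add: mult_nonneg_nonpos)
  ultimately have "d \<bullet> (g + h) \<le> norm d * N" using dg by (simp add: inner_add_right)
  with near have "1/2 * norm d * norm (g + h) \<le> norm d * N" by linarith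
  then have "1/2 * norm (g + h) \<le> N" using d by (simp add: mult.assoc)
  then have "(1/2 * norm (g + h))\<^sup>2 \<le> N\<^sup>2" by (intro power_mono) auto
  moreover have "(1/2 * norm (g + h))\<^sup>2 = 1/4 * (norm (g + h))\<^sup>2"
    by (simp add: power_mult_distrib power2_eq_square)
  ultimately have "1/4 * (2 + 2 * c) \<le> 1 - c\<^sup>2" using N2 norm_add_unit_sq[OF g h] c_def by simp
  then have "(2 * c - 1) * (c + 1) \<le> 0" by (simp add: algebra_simps power2_eq_square)
  moreover have "(2 * c - 1) * (c + 1) > 0" using gh c_def by simp
  ultimately show False by linarith
qed

lemma extreme_cone_bisector_unit: "extreme_cone n p Q g h \<Longrightarrow> norm (bisector g h) = 1"
  using bisector_unit(1)[of g h] unfolding extreme_cone_def by simp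

lemma extreme_cone_bisector:
  assumes cone: "extreme_cone n p Q g h" and d: "d \<noteq> 0"
    and near: "d \<bullet> bisector g h \<ge> 1/2 * norm d"
  shows "\<exists>z\<in>Q. \<forall>k<n. k \<notin> Q \<longrightarrow> d \<bullet> p k < d \<bullet> p z"
proof -
  have gh: "norm g = 1" "norm h = 1" "g \<bullet> h > 1/2" using cone unfolding extreme_cone_def by auto
  then have "g \<bullet> h > -1" by simp
  note b = bisector_unit[OF gh(1,2) this]
  have "d \<bullet> (g + h) = norm (g + h) * (d \<bullet> bisector g h)" by (subst b(2)) simp
  also have "\<dots> \<ge> norm (g + h) * (1/2 * norm d)" using near b(3) by (simp add: mult_left_mono)
  finally have "d \<bullet> (g + h) \<ge> 1/2 * norm d * norm (g + h)" by (simp add: algebra_simps)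
  then have "d \<bullet> g > 0" "d \<bullet> h > 0"
    using inner_pos_near_bisector[OF gh d] inner_pos_near_bisector[of h g d] gh d
    by (simp_all add: inner_commute add.commute)
  then show ?thesis using cone unfolding extreme_cone_def by blast
qed

text \<open>The direction m + m' would be within 60 degrees of both bisectors, so both Q and Q'
  would contain the strictly most extreme point in that direction.\<close>
lemma extreme_cones_disjoint_bisectors:
  assumes cone: "extreme_cone n p Q g h" and cone': "extreme_cone n p Q' g' h'"
    and disj: "Q \<inter> Q' = {}"
  shows "bisector g h \<bullet> bisector g' h' < -1/2"
proof (rule ccontr)
  define m where "m = bisector g h"
  define m' where "m' = bisector g' h'"
  define c where "c = m \<bullet> m'"
  define d where "d = m + m'"
  assume "\<not> bisector g h \<bullet> bisector g' h' < -1/2"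
  then have c: "c \<ge> -1/2" unfolding c_def m_def m'_def by simp
  have "norm m = 1" "norm m' = 1"
    using extreme_cone_bisector_unit cone cone' unfolding m_def m'_def by blast+
  then have mm: "m \<bullet> m = 1" "m' \<bullet> m' = 1" and nd: "(norm d)\<^sup>2 = 2 + 2 * c"
    using norm_add_unit_sq unfolding d_def c_def by (auto simp: dot_square_norm)
  then have "d \<noteq> 0" using c by auto
  have "m' \<bullet> m = c" unfolding c_def by (rule inner_commute)
  then have dm: "d \<bullet> m = 1 + c" "d \<bullet> m' = 1 + c" unfolding d_def c_def by (simp_all add: inner_add_left mm)
  have "(1/2 * norm d)\<^sup>2 = (1 + c) / 2" using nd by (simp add: power_divide)
  also have "\<dots> \<le> (1 + c)\<^sup>2"
  proof -
    have "(1 + c) * (1/2) \<le> (1 + c) * (1 + c)" using c by (intro mult_left_mono) auto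
    then show ?thesis by (simp add: power2_eq_square)
  qed
  finally have "(1/2 * norm d)\<^sup>2 \<le> (1 + c)\<^sup>2" .
  then have near: "1/2 * norm d \<le> 1 + c" by (rule power2_le_imp_le) (use c in simp)
  obtain z where z: "z \<in> Q" "\<forall>k<n. k \<notin> Q \<longrightarrow> d \<bullet> p k < d \<bullet> p z"
    using extreme_cone_bisector[OF cone \<open>d \<noteq> 0\<close>] dm(1) near unfolding m_def by force
  obtain z' where z': "z' \<in> Q'" "\<forall>k<n. k \<notin> Q' \<longrightarrow> d \<bullet> p k < d \<bullet> p z'"
    using extreme_cone_bisector[OF cone' \<open>d \<noteq> 0\<close>] dm(2) near unfolding m'_def by force
  have "z < n" "z' < n" using z(1) z'(1) cone cone' unfolding extreme_cone_def by auto
  then have "d \<bullet> p z' < d \<bullet> p z" "d \<bullet> p z < d \<bullet> p z'" using z z' disj by auto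
  then show False by simp
qed

lemma no_three_disjoint_extreme_cones:
  assumes "extreme_cone n p Q1 g1 h1" "extreme_cone n p Q2 g2 h2" "extreme_cone n p Q3 g3 h3"
    and "Q1 \<inter> Q2 = {}" "Q1 \<inter> Q3 = {}" "Q2 \<inter> Q3 = {}"
  shows False
proof -
  define m1 where "m1 = bisector g1 h1"
  define m2 where "m2 = bisector g2 h2"
  define m3 where "m3 = bisector g3 h3"
  have "m1 \<bullet> m2 < -1/2" "m1 \<bullet> m3 < -1/2" "m2 \<bullet> m3 < -1/2"
    using extreme_cones_disjoint_bisectors[OF assms(1,2,4)]
      extreme_cones_disjoint_bisectors[OF assms(1,3,5)]
      extreme_cones_disjoint_bisectors[OF assms(2,3,6)]
    unfolding m1_def m2_def m3_def by simp_all
  moreover have "m1 \<bullet> m1 = 1" "m2 \<bullet> m2 = 1" "m3 \<bullet> m3 = 1"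
    using extreme_cone_bisector_unit[OF assms(1)] extreme_cone_bisector_unit[OF assms(2)]
      extreme_cone_bisector_unit[OF assms(3)]
    unfolding m1_def m2_def m3_def by (simp_all add: dot_square_norm)
  moreover have "m2 \<bullet> m1 = m1 \<bullet> m2" "m3 \<bullet> m1 = m1 \<bullet> m3" "m3 \<bullet> m2 = m2 \<bullet> m3"
    by (simp_all add: inner_commute)
  ultimately have "(m1 + m2 + m3) \<bullet> (m1 + m2 + m3) < 0"
    by (simp add: inner_add_left inner_add_right)
  then show False using inner_ge_zero[of "m1 + m2 + m3"] by linarith
qed

section \<open>Fat caps\<close>

definition cross2 :: "real^2 \<Rightarrow> real^2 \<Rightarrow> real" where
  "cross2 a b = a$1 * b$2 - a$2 * b$1"

lemma orient_eq_cross2: "orient a b c = cross2 (b - a) (c - a)"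
  by (simp add: orient_def cross2_def)

lemma cross2_scaleR: "cross2 (s *\<^sub>R a) b = s * cross2 a b"
  by (simp add: cross2_def algebra_simps)

lemma cross2_shift: "cross2 ((V - A) + t *\<^sub>R (Y - V)) (V - A) = t * orient Y V A"
  by (simp add: cross2_def orient_def algebra_simps)

lemma cross2_decomp:
  assumes "cross2 a b \<noteq> 0"
  shows "r = (cross2 r b / cross2 a b) *\<^sub>R a + (cross2 a r / cross2 a b) *\<^sub>R b"
proof -
  have "r$i = (cross2 r b / cross2 a b) * a$i + (cross2 a r / cross2 a b) * b$i"
    if "i = 1 \<or> i = 2" for i
  proof -
    have "cross2 r b * a$i + cross2 a r * b$i = cross2 a b * r$i"
      using that by (auto simp: cross2_def algebra_simps)
    then show ?thesis using assms by (simp add: add_divide_distrib[symmetric] eq_divide_eq)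
  qed
  then show ?thesis unfolding vec_eq_iff forall_2 by simp
qed

lemma norm_convex_comb_le_max:
  fixes a b :: "'a::real_normed_vector"
  assumes "0 \<le> s" "0 \<le> t" "s + t \<le> 1"
  shows "norm (s *\<^sub>R a + t *\<^sub>R b) \<le> max (norm a) (norm b)"
proof -
  have "norm (s *\<^sub>R a + t *\<^sub>R b) \<le> s * norm a + t * norm b"
    using norm_triangle_ineq[of "s *\<^sub>R a" "t *\<^sub>R b"] assms by simp
  also have "\<dots> \<le> s * max (norm a) (norm b) + t * max (norm a) (norm b)"
    using assms by (intro add_mono mult_left_mono) auto
  also have "\<dots> = (s + t) * max (norm a) (norm b)" by (simp add: algebra_simps)
  also have "\<dots> \<le> max (norm a) (norm b)" using assms by (intro mult_left_le_one_le) (auto simp: le_max_iff_disj)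
  finally show ?thesis .
qed

text \<open>The sign conditions say that A lies in the triangle U X V.\<close>
lemma triangle_norm_bound:
  fixes U V X A :: "real^2"
  assumes D: "cross2 (X - U) (V - U) > 0"
    and l: "cross2 (A - U) (V - U) \<ge> 0" and m: "cross2 (X - U) (A - U) \<ge> 0"
    and k: "cross2 (X - A) (V - A) \<ge> 0"
  shows "norm (A - U) \<le> max (norm (X - U)) (norm (V - U))"
    and "norm (A - V) \<le> max (norm (X - V)) (norm (U - V))"
proof -
  define s where "s = cross2 (A - U) (V - U) / cross2 (X - U) (V - U)"
  define t where "t = cross2 (X - U) (A - U) / cross2 (X - U) (V - U)"
  have "cross2 (X - A) (V - A) = cross2 (X - U) (V - U) - cross2 (A - U) (V - U) - cross2 (X - U) (A - U)"
    unfolding cross2_def by (simp add: algebra_simps)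
  then have "cross2 (X - U) (V - U) * (1 - s - t) \<ge> 0"
    using D k unfolding s_def t_def by (simp add: algebra_simps)
  then have coeffs: "0 \<le> s" "0 \<le> t" "0 \<le> 1 - s - t"
    using D l m unfolding s_def t_def by (auto simp: zero_le_mult_iff)
  have eU: "A - U = s *\<^sub>R (X - U) + t *\<^sub>R (V - U)"
    using cross2_decomp[of "X - U" "V - U" "A - U"] D unfolding s_def t_def by simp
  then have "A - V = s *\<^sub>R (X - V) + (1 - s - t) *\<^sub>R (U - V)"
    by (simp add: algebra_simps)
  then show "norm (A - V) \<le> max (norm (X - V)) (norm (U - V))"
    using norm_convex_comb_le_max[of s "1 - s - t"] coeffs by simp
  show "norm (A - U) \<le> max (norm (X - U)) (norm (V - U))"
    using eU norm_convex_comb_le_max[of s t] coeffs by simp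
qed

lemma unit_directions_inner_gt_half:
  fixes a b :: "'a::real_inner"
  assumes a: "norm a > 1" and b: "norm b > 1" and ab: "norm (a - b) \<le> 1"
  shows "(1 / norm a) *\<^sub>R a \<bullet> (1 / norm b) *\<^sub>R b > 1/2"
proof -
  have "(norm a)\<^sup>2 + (norm b)\<^sup>2 \<ge> 2 * (norm a * norm b)"
    using sum_squares_bound[of "norm a" "norm b"] by (simp add: power2_eq_square)
  moreover have ab1: "norm a * norm b > 1" using a b by (metis less_1_mult)
  moreover have "(norm (a - b))\<^sup>2 \<le> 1" using ab by (simp add: power_le_one)
  moreover have "2 * (a \<bullet> b) = (norm a)\<^sup>2 + (norm b)\<^sup>2 - (norm (a - b))\<^sup>2"
    by (simp add: dot_norm_neg[of a b])
  ultimately have "2 * (a \<bullet> b) > norm a * norm b" by linarith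
  moreover have "norm a * norm b > 0" using ab1 by linarith
  ultimately have "1/2 < (a \<bullet> b) / (norm a * norm b)" by (simp add: less_divide_eq)
  then show ?thesis by (simp add: mult.commute)
qed

locale convex_arc =
  fixes n :: nat and p :: "nat \<Rightarrow> real^2" and u v :: nat
  assumes convex: "convex_ccw n p" and u: "u < n" and v: "v < n"
    and long: "2 \<le> cyc_dist n u v"
begin

abbreviation arc :: "nat set" where
  "arc \<equiv> cyc_open n u v"

definition u_next :: nat where
  "u_next = (u + 1) mod n"

definition v_prev :: nat where
  "v_prev = (u + (cyc_dist n u v - 1)) mod n"

lemma mem_arc_iff: "k \<in> arc \<longleftrightarrow> cyc_order3 n u k v"
  using mem_cyc_open_iff[OF u v] u v unfolding cyc_order3_def by auto

lemma arc_subset: "arc \<subseteq> {..<n}"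
  using mem_cyc_open_iff[OF u v] by auto

lemma cyc_dist_u_next: "cyc_dist n u u_next = 1"
  unfolding u_next_def using cyc_dist_add_mod[OF u, of 1] long cyc_dist_less[OF u v] by simp

lemma cyc_dist_v_prev: "cyc_dist n u v_prev = cyc_dist n u v - 1"
  unfolding v_prev_def using cyc_dist_add_mod[OF u] cyc_dist_less[OF u v] by simp

lemma u_next_mem: "u_next \<in> arc"
proof -
  have "u_next < n" unfolding u_next_def using u by simp
  then show ?thesis using long unfolding mem_cyc_open_iff[OF u v] cyc_dist_u_next by simp
qed

lemma v_prev_mem: "v_prev \<in> arc"
proof -
  have "v_prev < n" unfolding v_prev_def using u by simp
  then show ?thesis using long unfolding mem_cyc_open_iff[OF u v] cyc_dist_v_prev by simp
qed

lemma u_next_less: "u_next < n" and v_prev_less: "v_prev < n"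
  using arc_subset u_next_mem v_prev_mem by auto

lemma orient_u_next_nonneg:
  assumes k: "k \<in> arc"
  shows "orient (p u) (p u_next) (p k) \<ge> 0"
proof (cases "k = u_next")
  case False
  have "k < n" using k arc_subset by auto
  then have "cyc_dist n u k \<noteq> 1"
    using cyc_dist_inj[OF u _ u_next_less] False cyc_dist_u_next by metis
  then have "cyc_order4 n u u_next k v"
    using k u_next_less u v cyc_dist_u_next
    unfolding mem_cyc_open_iff[OF u v] cyc_order4_def by auto
  then show ?thesis using convex_ccw_orient_pos[OF convex cyc_order4_D(1)] by (simp add: less_imp_le)
qed (simp add: orient_def)

lemma orient_v_prev_nonneg:
  assumes k: "k \<in> arc"
  shows "orient (p v_prev) (p v) (p k) \<ge> 0"
proof (cases "k = v_prev")
  case False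
  have "k < n" using k arc_subset by auto
  then have "cyc_dist n u k \<noteq> cyc_dist n u v - 1"
    using cyc_dist_inj[OF u _ v_prev_less] False cyc_dist_v_prev by metis
  then have "cyc_order4 n u k v_prev v"
    using k v_prev_less u v cyc_dist_v_prev
    unfolding mem_cyc_open_iff[OF u v] cyc_order4_def by auto
  then have "cyc_order3 n v_prev v k" using cyc_order4_D(4) cyc_order3_rotate by blast
  then show ?thesis using convex_ccw_orient_pos[OF convex] by (simp add: less_imp_le)
qed (simp add: orient_def)

lemma beats_ends_extreme:
  assumes z: "z \<in> arc" "e \<bullet> p z > e \<bullet> p u" "e \<bullet> p z > e \<bullet> p v"
    and k: "k < n" "k \<notin> arc"
  shows "e \<bullet> p k < e \<bullet> p z"
proof (rule ccontr)
  assume c: "\<not> e \<bullet> p k < e \<bullet> p z"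
  then have "k \<noteq> u" "k \<noteq> v" using z by auto
  then have "cyc_dist n u v < cyc_dist n u k"
    using k cyc_dist_pos[OF u k(1)] cyc_dist_inj[OF u k(1) v] unfolding mem_cyc_open_iff[OF u v]
    by fastforce
  then have "cyc_order4 n u z v k" using z(1) k u v unfolding mem_arc_iff cyc_order3_def cyc_order4_def by auto
  from cyc_order4_not_separated[OF convex this, of e] c z show False by auto
qed

lemma extreme_of_ends:
  assumes "\<exists>z\<in>arc. e \<bullet> p z > e \<bullet> p u \<and> e \<bullet> p z > e \<bullet> p v"
  shows "\<exists>z\<in>arc. \<forall>k<n. k \<notin> arc \<longrightarrow> e \<bullet> p k < e \<bullet> p z"
  using assms beats_ends_extreme by blast

lemma cross2_u_next_v_prev_identity:
  "(d \<bullet> (p u - p v)) * cross2 (p u_next - p u) (p v - p v_prev) =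
   - orient (p v_prev) (p v) (p u) * (d \<bullet> (p u_next - p u))
   - orient (p u) (p u_next) (p v) * (d \<bullet> (p v - p v_prev))"
  by (simp add: cross2_def orient_def inner_vec2 algebra_simps)

text \<open>The two sides of the identity above have opposite signs unless u_next or v_prev beats v.\<close>
lemma diverging_end_beats_v:
  assumes div: "cross2 (p u_next - p u) (p v - p v_prev) \<le> 0"
    and du: "d \<bullet> p u_next > d \<bullet> p u"
  shows "d \<bullet> p u_next > d \<bullet> p v \<or> d \<bullet> p v_prev > d \<bullet> p v"
proof (rule ccontr)
  assume "\<not> ?thesis"
  then have "d \<bullet> (p u - p v) < 0" "d \<bullet> (p v - p v_prev) \<ge> 0"
    using du by (simp_all add: inner_diff_right)
  then have "(d \<bullet> (p u - p v)) * cross2 (p u_next - p u) (p v - p v_prev) \<ge> 0"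
    using div by (simp add: mult_nonpos_nonpos)
  moreover have "orient (p v_prev) (p v) (p u) > 0" "orient (p u) (p u_next) (p v) > 0"
    using convex_ccw_orient_pos[OF convex] cyc_order3_rotate u_next_mem v_prev_mem mem_arc_iff
    by blast+
  then have "orient (p v_prev) (p v) (p u) * (d \<bullet> (p u_next - p u)) > 0"
    "orient (p u) (p u_next) (p v) * (d \<bullet> (p v - p v_prev)) \<ge> 0"
    using du \<open>d \<bullet> (p v - p v_prev) \<ge> 0\<close> by (simp_all add: inner_diff_right)
  ultimately show False using cross2_u_next_v_prev_identity[of d] by linarith
qed

lemma extreme_cone_diverging:
  assumes div: "cross2 (p u_next - p u) (p v - p v_prev) \<le> 0"
  shows "\<exists>g. extreme_cone n p arc g g"
proof -
  have "orient (p u) (p u_next) (p v) > 0"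
    using convex_ccw_orient_pos[OF convex] u_next_mem mem_arc_iff by blast
  then have "p u_next \<noteq> p u" by (auto simp: orient_def)
  then have nz: "norm (p u_next - p u) > 0" by simp
  define g where "g = (1 / norm (p u_next - p u)) *\<^sub>R (p u_next - p u)"
  have "norm g = 1" unfolding g_def using nz by simp
  moreover have "\<exists>z\<in>arc. \<forall>k<n. k \<notin> arc \<longrightarrow> d \<bullet> p k < d \<bullet> p z" if "d \<bullet> g > 0" for d
  proof (rule extreme_of_ends)
    have "d \<bullet> (p u_next - p u) > 0"
      using that nz unfolding g_def by (simp add: zero_less_mult_iff zero_less_divide_iff)
    then have du: "d \<bullet> p u_next > d \<bullet> p u" by (simp add: inner_diff_right)
    show "\<exists>z\<in>arc. d \<bullet> p z > d \<bullet> p u \<and> d \<bullet> p z > d \<bullet> p v"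
    proof (cases "d \<bullet> p u_next > d \<bullet> p v")
      case True
      then show ?thesis using du u_next_mem by blast
    next
      case False
      then show ?thesis using du diverging_end_beats_v[OF div du] v_prev_mem
        by (intro bexI[of _ v_prev]) auto
    qed
  qed
  ultimately have "extreme_cone n p arc g g"
    unfolding extreme_cone_def using arc_subset by (auto simp: dot_square_norm)
  then show ?thesis by blast
qed

lemma apex_exists:
  assumes conv: "cross2 (p u_next - p u) (p v - p v_prev) > 0"
  obtains X s t where "0 < s" "0 < t"
    "X - p u = s *\<^sub>R (p u_next - p u)" "X - p v = t *\<^sub>R (p v_prev - p v)"
proof -
  define a where "a = p u_next - p u"
  define b where "b = p v - p v_prev"
  define s where "s = cross2 (p v - p u) b / cross2 a b"
  define t where "t = cross2 a (p v - p u) / cross2 a b"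
  have "orient (p u) (p v_prev) (p v) > 0" "orient (p u) (p u_next) (p v) > 0"
    using convex_ccw_orient_pos[OF convex] u_next_mem v_prev_mem mem_arc_iff by blast+
  then have "0 < s" "0 < t" using conv
    unfolding s_def t_def a_def b_def by (auto simp: orient_def cross2_def algebra_simps)
  moreover have "p v - p u = s *\<^sub>R a + t *\<^sub>R b"
    using cross2_decomp[of a b "p v - p u"] conv unfolding s_def t_def a_def b_def by simp
  then have "(p u + s *\<^sub>R a) - p v = t *\<^sub>R (p v_prev - p v)"
    unfolding b_def by (simp add: algebra_simps)
  ultimately show ?thesis using that[of s t "p u + s *\<^sub>R a"] unfolding a_def by simp
qed

lemma arc_in_apex_triangle:
  assumes s: "0 < s" and t: "0 < t"
    and Xu: "X - p u = s *\<^sub>R (p u_next - p u)" and Xv: "X - p v = t *\<^sub>R (p v_prev - p v)"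
    and k: "k \<in> arc"
  shows "norm (p k - p u) \<le> max (norm (X - p u)) (norm (p v - p u))"
    and "norm (p k - p v) \<le> max (norm (X - p v)) (norm (p u - p v))"
proof -
  have D: "cross2 (X - p u) (p v - p u) > 0"
    using convex_ccw_orient_pos[OF convex] u_next_mem mem_arc_iff s
    by (simp add: Xu cross2_scaleR orient_eq_cross2[symmetric])
  have l: "cross2 (p k - p u) (p v - p u) \<ge> 0"
    using convex_ccw_orient_pos[OF convex] k mem_arc_iff
    by (simp add: orient_eq_cross2[symmetric] less_imp_le)
  have m: "cross2 (X - p u) (p k - p u) \<ge> 0"
    using orient_u_next_nonneg[OF k] s by (simp add: Xu cross2_scaleR orient_eq_cross2[symmetric])
  have "X - p k = (p v - p k) + t *\<^sub>R (p v_prev - p v)" using Xv by (simp add: algebra_simps)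
  then have "cross2 (X - p k) (p v - p k) = t * orient (p v_prev) (p v) (p k)"
    by (simp only: cross2_shift)
  then have "cross2 (X - p k) (p v - p k) \<ge> 0" using orient_v_prev_nonneg[OF k] t by simp
  from triangle_norm_bound[OF D l m this]
  show "norm (p k - p u) \<le> max (norm (X - p u)) (norm (p v - p u))"
    and "norm (p k - p v) \<le> max (norm (X - p v)) (norm (p u - p v))" .
qed

text \<open>The apex is at distance more than 1 from both u and v, whereas dist u v \<le> 1; hence the
  angle at the apex is less than 60 degrees and the sides at the apex span the cone.\<close>
lemma extreme_cone_converging:
  assumes s: "0 < s" and t: "0 < t"
    and Xu: "X - p u = s *\<^sub>R (p u_next - p u)" and Xv: "X - p v = t *\<^sub>R (p v_prev - p v)"
    and a: "a \<in> arc" "dist (p a) (p u) > 1" and b: "b \<in> arc" "dist (p b) (p v) > 1"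
    and uv: "dist (p u) (p v) \<le> 1"
  shows "\<exists>g h. extreme_cone n p arc g h"
proof -
  note tri = arc_in_apex_triangle[OF s t Xu Xv]
  have A: "norm (X - p u) > 1"
    using tri(1)[OF a(1)] a(2) uv by (simp add: dist_norm norm_minus_commute le_max_iff_disj)
  have B: "norm (X - p v) > 1"
    using tri(2)[OF b(1)] b(2) uv by (simp add: dist_norm norm_minus_commute le_max_iff_disj)
  define g where "g = (1 / norm (X - p u)) *\<^sub>R (X - p u)"
  define h where "h = (1 / norm (X - p v)) *\<^sub>R (X - p v)"
  have "norm g = 1" "norm h = 1" using A B unfolding g_def h_def by auto
  moreover have "g \<bullet> h > 1/2"
    using unit_directions_inner_gt_half[OF A B] uv unfolding g_def h_def
    by (simp add: dist_norm norm_minus_commute)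
  moreover have "\<exists>z\<in>arc. \<forall>k<n. k \<notin> arc \<longrightarrow> d \<bullet> p k < d \<bullet> p z"
    if "d \<bullet> g > 0" "d \<bullet> h > 0" for d
  proof (rule extreme_of_ends)
    have "d \<bullet> (X - p u) > 0" "d \<bullet> (X - p v) > 0"
      using that A B unfolding g_def h_def by (simp_all add: zero_less_mult_iff zero_less_divide_iff)
    then have ends: "d \<bullet> p u_next > d \<bullet> p u" "d \<bullet> p v_prev > d \<bullet> p v"
      using s t by (simp_all add: Xu Xv zero_less_mult_iff inner_diff_right)
    show "\<exists>z\<in>arc. d \<bullet> p z > d \<bullet> p u \<and> d \<bullet> p z > d \<bullet> p v"
    proof (cases "d \<bullet> p u_next \<ge> d \<bullet> p v_prev")
      case True
      then show ?thesis using ends u_next_mem by (intro bexI[of _ u_next]) auto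
    next
      case False
      then show ?thesis using ends v_prev_mem by (intro bexI[of _ v_prev]) auto
    qed
  qed
  ultimately have "extreme_cone n p arc g h" unfolding extreme_cone_def using arc_subset by blast
  then show ?thesis by blast
qed

end

definition fat_cap :: "nat \<Rightarrow> (nat \<Rightarrow> real^2) \<Rightarrow> nat \<Rightarrow> nat \<Rightarrow> bool" where
  "fat_cap n p u v \<longleftrightarrow> u < n \<and> v < n \<and> dist (p u) (p v) \<le> 1 \<and>
     (\<exists>a\<in>cyc_open n u v. dist (p a) (p u) > 1) \<and> (\<exists>b\<in>cyc_open n u v. dist (p b) (p v) > 1)"

lemma fat_cap_extreme_cone:
  assumes P: "convex_ccw n p" and cap: "fat_cap n p u v"
  shows "\<exists>g h. extreme_cone n p (cyc_open n u v) g h"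
proof -
  obtain a b where uv: "u < n" "v < n" "dist (p u) (p v) \<le> 1"
    and a: "a \<in> cyc_open n u v" "dist (p a) (p u) > 1"
    and b: "b \<in> cyc_open n u v" "dist (p b) (p v) > 1"
    using cap unfolding fat_cap_def by blast
  then have "2 \<le> cyc_dist n u v" using mem_cyc_open_iff[OF uv(1,2)] by fastforce
  then interpret convex_arc n p u v using P uv by unfold_locales
  show ?thesis
  proof (cases "cross2 (p u_next - p u) (p v - p v_prev) \<le> 0")
    case True
    then show ?thesis using extreme_cone_diverging by blast
  next
    case False
    then obtain X s t where "0 < s" "0 < t"
      "X - p u = s *\<^sub>R (p u_next - p u)" "X - p v = t *\<^sub>R (p v_prev - p v)"
      using apex_exists[of thesis] by (meson not_le)
    from extreme_cone_converging[OF this a b uv(3)] show ?thesis .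
  qed
qed

lemma no_three_disjoint_fat_caps:
  assumes P: "convex_ccw n p"
    and caps: "fat_cap n p u1 v1" "fat_cap n p u2 v2" "fat_cap n p u3 v3"
    and "cyc_open n u1 v1 \<inter> cyc_open n u2 v2 = {}" "cyc_open n u1 v1 \<inter> cyc_open n u3 v3 = {}"
      "cyc_open n u2 v2 \<inter> cyc_open n u3 v3 = {}"
  shows False
  using fat_cap_extreme_cone[OF P caps(1)] fat_cap_extreme_cone[OF P caps(2)]
    fat_cap_extreme_cone[OF P caps(3)] no_three_disjoint_extreme_cones assms(5-7)
  by metis

section \<open>Chords of doubly assigned centers\<close>

locale separable_assignment =
  fixes n :: nat and p :: "nat \<Rightarrow> real^2" and w :: "nat \<Rightarrow> real"
    and S :: "nat set" and \<A> :: "nat set set" and \<phi> :: "nat set \<Rightarrow> nat"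
  assumes convex: "convex_ccw n p"
    and wpos: "\<forall>k<n. w k > 0"
    and opt: "optimal_dominating n p w S"
    and asg: "assignment n p S \<A> \<phi>"
    and sep: "line_separable p S \<A> \<phi>"
    and own_sublist: "\<forall>c\<in>S. n_assigned \<A> \<phi> c \<le> 2 \<and> (\<exists>A\<in>\<A>. \<phi> A = c \<and> c \<in> A)"
    and second_sublist: "\<forall>i\<in>S. \<forall>B\<in>\<A>. \<phi> B = i \<and> i \<notin> B \<longrightarrow>
      (\<exists>t\<in>B. \<exists>q1\<in>S. \<exists>q2\<in>S. q1 \<in> cyc_open n i t \<and> q2 \<in> cyc_open n t i \<and>
         dist (p t) (p q1) > 1 \<and> dist (p t) (p q2) > 1)"
begin

abbreviation grp :: "nat \<Rightarrow> nat set" where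
  "grp c \<equiv> group_of \<A> \<phi> c"

lemma centers_subset: "S \<subseteq> {..<n}"
  using opt unfolding optimal_dominating_def dominating_def by auto

lemma sublists_cover: "\<Union>\<A> = {..<n}"
  and sublists_disjoint: "A \<in> \<A> \<Longrightarrow> B \<in> \<A> \<Longrightarrow> A \<noteq> B \<Longrightarrow> A \<inter> B = {}"
  and sublist_cyc_closed: "A \<in> \<A> \<Longrightarrow> \<exists>s<n. \<exists>e<n. A = cyc_closed n s e"
  and assigned_center: "A \<in> \<A> \<Longrightarrow> \<phi> A \<in> S"
  and assigned_near: "A \<in> \<A> \<Longrightarrow> k \<in> A \<Longrightarrow> dist (p k) (p (\<phi> A)) \<le> 1"
  using asg unfolding assignment_def cyc_partition_def sublist_idx_def by auto

lemma finite_sublists: "finite \<A>"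
  using sublists_cover by (metis finite_UnionD finite_lessThan)

lemma mem_grp_iff: "k \<in> grp c \<longleftrightarrow> (\<exists>A\<in>\<A>. \<phi> A = c \<and> k \<in> A)"
  unfolding group_of_def by auto

lemma grp_disjoint: "c \<noteq> d \<Longrightarrow> grp c \<inter> grp d = {}"
  unfolding group_of_def using sublists_disjoint by fastforce

lemma grp_less: "k \<in> grp c \<Longrightarrow> k < n"
  unfolding mem_grp_iff using sublists_cover by blast

lemma center_in_grp: "c \<in> S \<Longrightarrow> c \<in> grp c"
  unfolding mem_grp_iff using own_sublist by blast

lemma groups_not_interleaved:
  assumes "c \<in> S" "d \<in> S" "c \<noteq> d" "cyc_order4 n a b a' b'"
    and "a \<in> grp c" "a' \<in> grp c" "b \<in> grp d" "b' \<in> grp d"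
  shows False
proof -
  obtain e :: "real^2" and r where
    "((\<forall>k\<in>grp c. e \<bullet> p k \<le> r) \<and> (\<forall>k\<in>grp d. e \<bullet> p k > r)) \<or>
     ((\<forall>k\<in>grp d. e \<bullet> p k \<le> r) \<and> (\<forall>k\<in>grp c. e \<bullet> p k > r))"
    using sep assms(1-3) unfolding line_separable_def by blast
  then have "max (e \<bullet> p a) (e \<bullet> p a') < min (e \<bullet> p b) (e \<bullet> p b') \<or>
      max (e \<bullet> p b) (e \<bullet> p b') < min (e \<bullet> p a') (e \<bullet> p a)"
    using assms(5-8) by fastforce
  then show False
    using cyc_order4_not_separated[OF convex assms(4)]
      cyc_order4_not_separated[OF convex cyc_order4_rotate[OF assms(4)]] by blast
qed

text \<open>Optimality: S minus q is not dominating, and the undominated point can only be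
  assigned to q.\<close>
lemma private_neighbour:
  assumes q: "q \<in> S"
  obtains r where "r \<in> grp q" "\<forall>s\<in>S. s \<noteq> q \<longrightarrow> dist (p r) (p s) > 1"
proof -
  have "\<not> dominating n p (S - {q})"
  proof
    assume "dominating n p (S - {q})"
    then have "sum w S \<le> sum w (S - {q})" using opt unfolding optimal_dominating_def by blast
    moreover have "sum w S = w q + sum w (S - {q})"
      using q centers_subset finite_subset by (metis finite_lessThan sum.remove)
    moreover have "w q > 0" using wpos q centers_subset by auto
    ultimately show False by linarith
  qed
  moreover have "S - {q} \<subseteq> {..<n}" using centers_subset by auto
  ultimately obtain r where "r < n" "\<not> (r \<in> S - {q} \<or> (\<exists>s\<in>S - {q}. dist (p r) (p s) \<le> 1))"
    unfolding dominating_def by blast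
  then have r: "r < n" "\<forall>s\<in>S - {q}. dist (p r) (p s) > 1" by (auto simp: not_le)
  then obtain A where A: "A \<in> \<A>" "r \<in> A" using sublists_cover by blast
  then have "\<phi> A \<in> S" "dist (p r) (p (\<phi> A)) \<le> 1" using assigned_center assigned_near by auto
  then have "\<phi> A = q" using r(2) by (meson DiffI not_le singletonD)
  then show ?thesis using that A r(2) unfolding mem_grp_iff by blast
qed

definition doubles :: "nat set" where
  "doubles = {c\<in>S. n_assigned \<A> \<phi> c = 2}"

lemma n_assigned_single:
  assumes "c \<in> S" "c \<notin> doubles"
  shows "n_assigned \<A> \<phi> c = 1"
proof -
  have "{A\<in>\<A>. \<phi> A = c} \<noteq> {}" using own_sublist assms(1) by blast
  then have "1 \<le> n_assigned \<A> \<phi> c"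
    unfolding n_assigned_def using finite_sublists by (simp add: Suc_le_eq card_gt_0_iff)
  then show ?thesis using own_sublist assms unfolding doubles_def by force
qed

definition is_mate :: "nat \<Rightarrow> nat \<Rightarrow> bool" where
  "is_mate c t \<longleftrightarrow>
     (\<exists>A\<in>\<A>. \<exists>B\<in>\<A>. A \<noteq> B \<and> \<phi> A = c \<and> \<phi> B = c \<and> c \<in> A \<and> t \<in> B) \<and>
     (\<exists>q1\<in>S. \<exists>q2\<in>S. q1 \<in> cyc_open n c t \<and> q2 \<in> cyc_open n t c \<and>
        dist (p t) (p q1) > 1 \<and> dist (p t) (p q2) > 1)"

text \<open>The mate of a doubly assigned center c is the point p_t of condition (3) for its second
  sublist; the segment from c to its mate is the chord of c.\<close>
definition mate :: "nat \<Rightarrow> nat" where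
  "mate c = (SOME t. is_mate c t)"

lemma is_mate_mate:
  assumes "c \<in> doubles"
  shows "is_mate c (mate c)"
proof -
  have cS: "c \<in> S" and "card {A\<in>\<A>. \<phi> A = c} = 2"
    using assms unfolding doubles_def n_assigned_def by auto
  then obtain A1 A2 where A12: "{A\<in>\<A>. \<phi> A = c} = {A1, A2}" "A1 \<noteq> A2" by (meson card_2_iff)
  obtain A where A: "A \<in> \<A>" "\<phi> A = c" "c \<in> A" using own_sublist cS by blast
  then obtain B where B: "B \<in> \<A>" "\<phi> B = c" "A \<noteq> B" using A12 by blast
  then have "c \<notin> B" using sublists_disjoint A by blast
  then obtain t where "t \<in> B" "\<exists>q1\<in>S. \<exists>q2\<in>S. q1 \<in> cyc_open n c t \<and> q2 \<in> cyc_open n t c \<and>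
      dist (p t) (p q1) > 1 \<and> dist (p t) (p q2) > 1"
    using second_sublist cS B by blast
  then have "is_mate c t" unfolding is_mate_def using A B by blast
  then show ?thesis unfolding mate_def by (rule someI)
qed

lemma mate_props:
  assumes "c \<in> doubles"
  shows "c \<in> S" "c < n" "mate c < n" "c \<in> grp c" "mate c \<in> grp c" "mate c \<noteq> c"
    "dist (p c) (p (mate c)) \<le> 1"
proof -
  show cS: "c \<in> S" using assms doubles_def by auto
  then show "c < n" "c \<in> grp c" using centers_subset center_in_grp by auto
  obtain A B where AB: "A \<in> \<A>" "B \<in> \<A>" "A \<noteq> B" "\<phi> A = c" "\<phi> B = c" "c \<in> A" "mate c \<in> B"
    using is_mate_mate[OF assms] unfolding is_mate_def by blast
  then show "mate c \<in> grp c" unfolding mem_grp_iff by blast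
  then show "mate c < n" by (rule grp_less)
  show "mate c \<noteq> c" using sublists_disjoint[OF AB(1-3)] AB(6,7) by auto
  show "dist (p c) (p (mate c)) \<le> 1" using assigned_near[OF AB(2,7)] AB(5) by (simp add: dist_commute)
qed

lemma mate_far_centers:
  assumes "c \<in> doubles"
  obtains q1 q2 where "q1 \<in> S" "q2 \<in> S" "q1 \<in> cyc_open n c (mate c)" "q2 \<in> cyc_open n (mate c) c"
    "dist (p (mate c)) (p q1) > 1" "dist (p (mate c)) (p q2) > 1"
  using is_mate_mate[OF assms] unfolding is_mate_def by blast

text \<open>A private neighbour of a center q between two points u, v of the group of c lies between
  u and v as well, by line separability of the groups of c and q.\<close>
lemma far_point_between:
  assumes "c \<in> S" "u \<in> grp c" "v \<in> grp c" "u \<noteq> v" "q \<in> S" "q \<noteq> c" "q \<in> cyc_open n u v"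
  shows "\<exists>r\<in>cyc_open n u v. dist (p r) (p c) > 1"
proof -
  obtain r where r: "r \<in> grp q" "\<forall>s\<in>S. s \<noteq> q \<longrightarrow> dist (p r) (p s) > 1"
    using private_neighbour assms(5) by blast
  have uv: "u < n" "v < n" using assms(2,3) grp_less by auto
  have "r \<noteq> u" "r \<noteq> v" using grp_disjoint[of c q] assms r by blast+
  moreover have "r \<notin> cyc_open n v u"
  proof
    assume "r \<in> cyc_open n v u"
    then have "cyc_order4 n u q v r" using cyc_order4_of_cyc_open[OF uv assms(7)] by blast
    then show False
      using groups_not_interleaved[OF assms(1,5) assms(6)[symmetric]] assms(2,3)
        center_in_grp[OF assms(5)] r(1) by blast
  qed
  ultimately have "r \<in> cyc_open n u v" using cyc_open_cases[OF uv grp_less[OF r(1)] assms(4)] by blast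
  then show ?thesis using r(2) assms(1,6) by auto
qed

lemma fat_cap_mate:
  assumes "c \<in> doubles"
  shows "fat_cap n p c (mate c)" "fat_cap n p (mate c) c"
proof -
  note m = mate_props[OF assms]
  obtain q1 q2 where q: "q1 \<in> S" "q2 \<in> S" "q1 \<in> cyc_open n c (mate c)" "q2 \<in> cyc_open n (mate c) c"
    "dist (p (mate c)) (p q1) > 1" "dist (p (mate c)) (p q2) > 1"
    using mate_far_centers[OF assms] by blast
  have "q1 \<noteq> c" "q2 \<noteq> c" using q(3,4) cyc_open_endpoints m(2,3) by blast+
  then obtain r1 r2 where "r1 \<in> cyc_open n c (mate c)" "dist (p r1) (p c) > 1"
      "r2 \<in> cyc_open n (mate c) c" "dist (p r2) (p c) > 1"
    using far_point_between[OF m(1,4,5) m(6)[symmetric] q(1) _ q(3)]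
      far_point_between[OF m(1,5,4) m(6) q(2) _ q(4)] by blast
  then show "fat_cap n p c (mate c)" "fat_cap n p (mate c) c"
    unfolding fat_cap_def using m q by (auto simp: dist_commute)
qed

definition chord :: "nat \<Rightarrow> nat \<Rightarrow> nat \<Rightarrow> bool" where
  "chord c x y \<longleftrightarrow> c \<in> doubles \<and> ((x = c \<and> y = mate c) \<or> (x = mate c \<and> y = c))"

lemma chord_swap: "chord c x y \<Longrightarrow> chord c y x"
  unfolding chord_def by auto

lemma chord_props:
  assumes "chord c x y"
  shows "c \<in> doubles" "x < n" "y < n" "x \<noteq> y" "x \<in> grp c" "y \<in> grp c" "fat_cap n p x y"
    and "\<exists>q\<in>S. q \<in> cyc_open n x y"
  using assms mate_props[of c] fat_cap_mate[of c] mate_far_centers[of c] unfolding chord_def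
  by (metis (no_types, lifting))+

lemma chords_not_crossing:
  assumes "chord c x y" "chord d x' y'" "c \<noteq> d"
  shows "(x' \<in> cyc_open n x y \<and> y' \<in> cyc_open n x y) \<or> (x' \<in> cyc_open n y x \<and> y' \<in> cyc_open n y x)"
proof -
  note a = chord_props[OF assms(1)] and b = chord_props[OF assms(2)]
  have cd: "c \<in> S" "d \<in> S" using a(1) b(1) doubles_def by auto
  have "x' \<noteq> x" "x' \<noteq> y" "y' \<noteq> x" "y' \<noteq> y" using grp_disjoint[OF assms(3)] a(5,6) b(5,6) by blast+
  then have "x' \<in> cyc_open n x y \<or> x' \<in> cyc_open n y x" "y' \<in> cyc_open n x y \<or> y' \<in> cyc_open n y x"
    using cyc_open_cases[OF a(2,3) _ a(4)] b(2,3) by blast+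
  moreover have False if "k \<in> cyc_open n x y" "k' \<in> cyc_open n y x" "{k, k'} = {x', y'}" for k k'
    using groups_not_interleaved[OF cd assms(3) cyc_order4_of_cyc_open[OF a(2,3) that(1,2)]]
      a(5,6) b(5,6) that(3) by (metis doubleton_eq_iff)
  ultimately show ?thesis by blast
qed

lemma chord_nested_shorter:
  assumes "chord c x y" "chord d x' y'" "c \<noteq> d" "x' \<in> cyc_open n x y" "y' \<in> cyc_open n x y"
  shows "\<exists>u v. chord d u v \<and> cyc_open n u v \<subseteq> cyc_open n x y \<and>
    card (cyc_open n u v) < card (cyc_open n x y)"
proof -
  note a = chord_props[OF assms(1)] and b = chord_props[OF assms(2)]
  have "cyc_open n x' y' \<subseteq> cyc_open n x y \<or> cyc_open n y' x' \<subseteq> cyc_open n x y"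
    using cyc_open_sub_arc[OF a(2,3) assms(4,5) b(4)] .
  moreover have "x' \<notin> cyc_open n x' y'" "y' \<notin> cyc_open n y' x'" using cyc_open_endpoints b(2,3) by blast+
  ultimately show ?thesis
    using assms(2,4,5) chord_swap psubset_card_mono[OF finite_cyc_open] by (metis psubsetI)
qed

lemma single_center_not_on_chord:
  assumes "i \<in> S" "i \<notin> doubles" "chord c x y"
  shows "i \<noteq> x" "i \<noteq> y"
proof -
  note a = chord_props[OF assms(3)]
  have "i \<noteq> c" using assms(2) a(1) by blast
  then show "i \<noteq> x" "i \<noteq> y" using grp_disjoint[of i c] center_in_grp[OF assms(1)] a(5,6) by blast+
qed

section \<open>The decoupling pair\<close>

definition shortest_chord :: "nat \<Rightarrow> nat \<Rightarrow> nat \<Rightarrow> bool" where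
  "shortest_chord c x y \<longleftrightarrow> chord c x y \<and>
     (\<forall>d u v. chord d u v \<longrightarrow> card (cyc_open n x y) \<le> card (cyc_open n u v))"

lemma shortest_chord_exists:
  assumes "doubles \<noteq> {}"
  obtains c x y where "shortest_chord c x y"
proof -
  obtain c where "c \<in> doubles" using assms by blast
  then have "chord c c (mate c)" unfolding chord_def by simp
  then have "\<exists>t. (\<lambda>(c, x, y). chord c x y) t \<and>
      (\<forall>t'. (\<lambda>(c, x, y). chord c x y) t' \<longrightarrow>
         (\<lambda>(c, x, y). card (cyc_open n x y)) t \<le> (\<lambda>(c, x, y). card (cyc_open n x y)) t')"
    by (intro ex_has_least_nat[of _ "(c, c, mate c)"]) simp
  then show ?thesis using that unfolding shortest_chord_def by fast
qed

lemma shortest_chord_center_single: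
  assumes L: "shortest_chord c0 x0 y0" and i: "i \<in> S" "i \<in> cyc_open n x0 y0"
  shows "i \<notin> doubles"
proof
  assume "i \<in> doubles"
  then have chi: "chord i i (mate i)" unfolding chord_def by simp
  note a = chord_props[OF conjunct1[OF L[unfolded shortest_chord_def]]]
  have "c0 \<noteq> i" using i(2) a(2,3) cyc_open_endpoints L unfolding shortest_chord_def chord_def by blast
  then have "mate i \<in> cyc_open n x0 y0"
    using chords_not_crossing[OF _ chi] L i(2) cyc_open_disjoint[OF a(2,3)]
    unfolding shortest_chord_def by blast
  then show False
    using chord_nested_shorter[OF _ chi \<open>c0 \<noteq> i\<close> i(2)] L leD unfolding shortest_chord_def by blast
qed

lemma shortest_chord_disjoint_arc:
  assumes L: "shortest_chord c0 x0 y0" and i: "i \<in> cyc_open n x0 y0"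
    and ch: "chord c x y" and iyx: "i \<in> cyc_open n y x"
  shows "cyc_open n x y \<inter> cyc_open n x0 y0 = {}"
proof -
  have ch0: "chord c0 x0 y0" using L unfolding shortest_chord_def by blast
  note a = chord_props[OF ch0] and b = chord_props[OF ch]
  have ixy: "i \<notin> cyc_open n x y" using iyx cyc_open_disjoint[OF b(2,3)] by blast
  show ?thesis
  proof (cases "c = c0")
    case True
    then have "x = y0 \<and> y = x0" using ch ch0 i ixy unfolding chord_def by auto
    then show ?thesis using cyc_open_disjoint[OF a(2,3)] by blast
  next
    case False
    then have "c0 \<noteq> c" by simp
    from chords_not_crossing[OF ch0 ch this]
    consider "x \<in> cyc_open n x0 y0" "y \<in> cyc_open n x0 y0"
      | "x \<in> cyc_open n y0 x0" "y \<in> cyc_open n y0 x0" by blast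
    then show ?thesis
    proof cases
      case 1
      then show ?thesis using chord_nested_shorter[OF ch0 ch] False L leD
        unfolding shortest_chord_def by metis
    next
      case 2
      then have "cyc_open n x y \<subseteq> cyc_open n y0 x0 \<or> cyc_open n y x \<subseteq> cyc_open n y0 x0"
        using cyc_open_sub_arc[OF a(3,2)] b(4) by blast
      then show ?thesis using iyx i cyc_open_disjoint[OF a(2,3)] by blast
    qed
  qed
qed

definition far_arc :: "nat \<Rightarrow> nat \<Rightarrow> nat set" where
  "far_arc i c = (if i \<in> cyc_open n c (mate c) then cyc_open n (mate c) c else cyc_open n c (mate c))"

lemma far_arc_chord:
  assumes i: "i \<in> S" "i \<notin> doubles" and c: "c \<in> doubles"
  obtains x y where "chord c x y" "far_arc i c = cyc_open n x y" "i \<in> cyc_open n y x"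
proof (cases "i \<in> cyc_open n c (mate c)")
  case True
  then show ?thesis using that[of "mate c" c] c unfolding far_arc_def chord_def by simp
next
  case False
  have ch: "chord c c (mate c)" using c unfolding chord_def by simp
  note f = chord_props[OF ch]
  have "i \<in> cyc_open n (mate c) c"
    using cyc_open_cases[OF f(2,3) _ f(4)] i centers_subset single_center_not_on_chord[OF i ch] False
    by blast
  then show ?thesis using that[OF ch] False unfolding far_arc_def by simp
qed

lemma far_arc_avoids:
  assumes "i \<in> S" "i \<notin> doubles" "c \<in> doubles"
  shows "i \<notin> far_arc i c"
proof -
  obtain x y where xy: "chord c x y" "far_arc i c = cyc_open n x y" "i \<in> cyc_open n y x"
    using far_arc_chord[OF assms] .
  then show ?thesis using cyc_open_disjoint[OF chord_props(2,3)[OF xy(1)]] by blast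
qed

lemma far_arc_fat_cap:
  assumes "i \<in> S" "i \<notin> doubles" "c \<in> doubles"
  obtains x y where "fat_cap n p x y" "far_arc i c = cyc_open n x y"
proof -
  obtain x y where "chord c x y" "far_arc i c = cyc_open n x y"
    using far_arc_chord[OF assms] .
  then show ?thesis using that chord_props(7) by blast
qed

text \<open>Far arcs avoid the shortest chord arc L, so two disjoint far arcs and L would be three
  disjoint fat caps.\<close>
lemma far_arcs_intersect:
  assumes L: "shortest_chord c0 x0 y0" and i: "i \<in> S" "i \<notin> doubles" "i \<in> cyc_open n x0 y0"
    and c: "c \<in> doubles" "c' \<in> doubles"
  shows "far_arc i c \<inter> far_arc i c' \<noteq> {}"
proof
  assume disj: "far_arc i c \<inter> far_arc i c' = {}"
  have "far_arc i d \<inter> cyc_open n x0 y0 = {}" if "d \<in> doubles" for d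
    using far_arc_chord[OF i(1,2) that] shortest_chord_disjoint_arc[OF L i(3)] by metis
  moreover have "fat_cap n p x0 y0" using L chord_props(7) unfolding shortest_chord_def by blast
  ultimately show False
    using far_arc_fat_cap[OF i(1,2) c(1)] far_arc_fat_cap[OF i(1,2) c(2)] disj
      no_three_disjoint_fat_caps[OF convex] c by (metis inf_commute)
qed

text \<open>The far arcs do not cross and pairwise intersect, so they form a chain under inclusion.\<close>
lemma smallest_far_arc_subset:
  assumes L: "shortest_chord c0 x0 y0" and i: "i \<in> S" "i \<notin> doubles" "i \<in> cyc_open n x0 y0"
    and c1: "c1 \<in> doubles" "\<forall>c\<in>doubles. card (far_arc i c1) \<le> card (far_arc i c)"
    and c: "c \<in> doubles"
  shows "far_arc i c1 \<subseteq> far_arc i c"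
proof
  fix z assume z: "z \<in> far_arc i c1"
  obtain x y where xy: "chord c x y" "far_arc i c = cyc_open n x y" "i \<in> cyc_open n y x"
    using far_arc_chord[OF i(1,2) c] .
  obtain x1 y1 where xy1: "chord c1 x1 y1" "far_arc i c1 = cyc_open n x1 y1" "i \<in> cyc_open n y1 x1"
    using far_arc_chord[OF i(1,2) c1(1)] .
  note a = chord_props[OF xy(1)] and a1 = chord_props[OF xy1(1)]
  show "z \<in> far_arc i c"
  proof (cases "c = c1")
    case False
    then have "c1 \<noteq> c" by simp
    from chords_not_crossing[OF xy1(1) xy(1) this]
    consider "x \<in> cyc_open n x1 y1" "y \<in> cyc_open n x1 y1"
      | "x \<in> cyc_open n y1 x1" "y \<in> cyc_open n y1 x1" by blast
    then show ?thesis
    proof cases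
      case 1
      have "\<not> cyc_open n y x \<subseteq> cyc_open n x1 y1"
        using xy(3) xy1(3) cyc_open_disjoint[OF a1(2,3)] by blast
      then have "far_arc i c \<subseteq> far_arc i c1"
        using cyc_open_sub_arc[OF a1(2,3) 1 a(4)] xy(2) xy1(2) by blast
      moreover have "x \<notin> far_arc i c" using xy(2) cyc_open_endpoints a(2,3) by blast
      ultimately have "card (far_arc i c) < card (far_arc i c1)"
        using 1 xy1(2) by (metis finite_cyc_open psubsetI psubset_card_mono)
      then show ?thesis using c1(2) c by fastforce
    next
      case 2
      then have "cyc_open n x y \<subseteq> cyc_open n y1 x1 \<or> cyc_open n y x \<subseteq> cyc_open n y1 x1"
        using cyc_open_sub_arc[OF a1(3,2)] a(4) by blast
      moreover have "\<not> cyc_open n x y \<subseteq> cyc_open n y1 x1"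
        using far_arcs_intersect[OF L i c1(1) c] xy(2) xy1(2) cyc_open_disjoint[OF a1(2,3)] by blast
      moreover have "z \<noteq> x" "z \<noteq> y" "z < n"
        using 2 z xy1(2) cyc_open_disjoint[OF a1(2,3)] mem_cyc_open_iff[OF a1(2,3)] by blast+
      ultimately show ?thesis
        using z xy1(2) xy(2) cyc_open_cases[OF a(2,3) _ a(4)] cyc_open_disjoint[OF a1(2,3)] by blast
    qed
  qed (use z in simp)
qed

lemma sublist_inside_arc:
  assumes X: "X \<in> \<A>" and ab: "a < n" "b < n" "a \<notin> X" "b \<notin> X"
    and z: "z \<in> X" "z \<in> cyc_open n a b"
  shows "X \<subseteq> cyc_open n a b"
proof -
  obtain s e where "s < n" "e < n" "X = cyc_closed n s e" using sublist_cyc_closed[OF X] by blast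
  then show ?thesis using cyc_closed_subset_cyc_open[OF ab(1,2)] ab(3,4) z by blast
qed

lemma single_center_not_in_double_sublist:
  assumes "i \<in> S" "i \<notin> doubles" "X \<in> \<A>" "\<phi> X \<in> doubles"
  shows "i \<notin> X"
proof -
  have "X \<subseteq> grp (\<phi> X)" using assms(3) unfolding group_of_def by blast
  moreover have "\<phi> X \<noteq> i" using assms(2,4) by auto
  ultimately show ?thesis using grp_disjoint center_in_grp[OF assms(1)] by blast
qed

lemma far_arc_separates:
  assumes i: "i \<in> S" "i \<notin> doubles" and j: "j \<in> S" "j \<notin> doubles"
    and c: "c \<in> doubles" and jc: "j \<in> far_arc i c"
  shows "\<exists>A\<in>\<A>. \<exists>B\<in>\<A>. A \<noteq> B \<and> \<phi> A = c \<and> \<phi> B = c \<and>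
           A \<subseteq> cyc_open n i j \<and> B \<subseteq> cyc_open n j i"
proof -
  obtain x y where xy: "chord c x y" "far_arc i c = cyc_open n x y" "i \<in> cyc_open n y x"
    using far_arc_chord[OF i c] .
  note f = chord_props[OF xy(1)]
  have "cyc_order4 n i x j y"
    using cyc_order4_rotate[OF cyc_order4_of_cyc_open[OF f(3,2) xy(3)]] jc xy(2) by simp
  then have sides: "x \<in> cyc_open n i j" "y \<in> cyc_open n j i" by (rule cyc_open_of_cyc_order4)+
  have ij: "i < n" "j < n" using i(1) j(1) centers_subset by auto
  have inside: "X \<subseteq> cyc_open n a b"
    if "X \<in> \<A>" "\<phi> X = c" "(a, b) = (i, j) \<or> (a, b) = (j, i)" "z \<in> X" "z \<in> cyc_open n a b"
    for X a b z
    using sublist_inside_arc[of X a b z] single_center_not_in_double_sublist[OF i, of X]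
      single_center_not_in_double_sublist[OF j, of X] ij that c by auto
  obtain A B where AB: "A \<in> \<A>" "B \<in> \<A>" "A \<noteq> B" "\<phi> A = c" "\<phi> B = c" "c \<in> A" "mate c \<in> B"
    using is_mate_mate[OF c] unfolding is_mate_def by blast
  have "(x = c \<and> y = mate c) \<or> (x = mate c \<and> y = c)" using xy(1) unfolding chord_def by blast
  then show ?thesis
  proof
    assume "x = c \<and> y = mate c"
    then have "A \<subseteq> cyc_open n i j" "B \<subseteq> cyc_open n j i"
      using inside[OF AB(1,4) _ AB(6)] inside[OF AB(2,5) _ AB(7)] sides by auto
    then show ?thesis using AB by blast
  next
    assume "x = mate c \<and> y = c"
    then have "B \<subseteq> cyc_open n i j" "A \<subseteq> cyc_open n j i"
      using inside[OF AB(2,5) _ AB(7)] inside[OF AB(1,4) _ AB(6)] sides by auto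
    then show ?thesis using AB by blast
  qed
qed

definition decoupling_pair :: "nat \<Rightarrow> nat \<Rightarrow> bool" where
  "decoupling_pair i j \<longleftrightarrow> i \<in> S \<and> j \<in> S \<and> i \<noteq> j \<and>
     n_assigned \<A> \<phi> i = 1 \<and> n_assigned \<A> \<phi> j = 1 \<and>
     (\<forall>c\<in>S. n_assigned \<A> \<phi> c = 2 \<longrightarrow>
        (\<exists>A\<in>\<A>. \<exists>B\<in>\<A>. A \<noteq> B \<and> \<phi> A = c \<and> \<phi> B = c \<and>
           A \<subseteq> cyc_open n i j \<and> B \<subseteq> cyc_open n j i))"

lemma decoupling_pair_without_doubles:
  assumes "card S \<ge> 2" "doubles = {}"
  shows "\<exists>i j. decoupling_pair i j"
proof -
  obtain T where "T \<subseteq> S" "card T = 2" using obtain_subset_with_card_n assms(1) by metis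
  then obtain i j where "i \<in> S" "j \<in> S" "i \<noteq> j" by (metis card_2_iff insert_subset)
  then show ?thesis
    using n_assigned_single assms(2) unfolding decoupling_pair_def doubles_def by blast
qed

lemma exists_decoupling_pair:
  assumes "card S \<ge> 2"
  shows "\<exists>i j. decoupling_pair i j"
proof (cases "doubles = {}")
  case False
  obtain c0 x0 y0 where L: "shortest_chord c0 x0 y0" using shortest_chord_exists[OF False] .
  obtain i where i: "i \<in> S" "i \<in> cyc_open n x0 y0"
    using L chord_props(8) unfolding shortest_chord_def by blast
  have i1: "i \<notin> doubles" using shortest_chord_center_single[OF L i] .
  obtain c where "c \<in> doubles" using False by blast
  then obtain c1 where c1: "c1 \<in> doubles" "\<forall>c\<in>doubles. card (far_arc i c1) \<le> card (far_arc i c)"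
    using ex_has_least_nat[of "\<lambda>c. c \<in> doubles" c "\<lambda>c. card (far_arc i c)"] by blast
  obtain j where j: "j \<in> S" "j \<in> far_arc i c1"
    using far_arc_chord[OF i(1) i1 c1(1)] chord_props(8) by metis
  note sub = smallest_far_arc_subset[OF L i(1) i1 i(2) c1]
  have j1: "j \<notin> doubles"
  proof
    assume jd: "j \<in> doubles"
    then have "j \<in> far_arc i j" using sub j(2) by blast
    then show False
      using cyc_open_endpoints mate_props(2,3)[OF jd] unfolding far_arc_def by (auto split: if_splits)
  qed
  have "i \<noteq> j" using far_arc_avoids[OF i(1) i1 c1(1)] j(2) by blast
  then show ?thesis
    using i(1) i1 j(1) j1 n_assigned_single far_arc_separates[OF i(1) i1 j(1) j1] sub j(2)
    unfolding decoupling_pair_def doubles_def by blast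
qed (use decoupling_pair_without_doubles assms in blast)

end

theorem lemma4:
  fixes n :: nat and p :: "nat \<Rightarrow> real^2" and w :: "nat \<Rightarrow> real"
    and S :: "nat set" and \<A> :: "nat set set" and \<phi> :: "nat set \<Rightarrow> nat"
  assumes P: "convex_ccw n p"
    and wpos: "\<forall>k<n. w k > 0"
    and opt: "optimal_dominating n p w S"
    and two: "card S \<ge> 2"
    and asg: "assignment n p S \<A> \<phi>"
    and c1: "line_separable p S \<A> \<phi>"
    and c2: "\<forall>c\<in>S. n_assigned \<A> \<phi> c \<le> 2 \<and> (\<exists>A\<in>\<A>. \<phi> A = c \<and> c \<in> A)"
    and c3: "\<forall>i\<in>S. \<forall>B\<in>\<A>. \<phi> B = i \<and> i \<notin> B \<longrightarrow>
               (\<exists>t\<in>B. \<exists>q1\<in>S. \<exists>q2\<in>S. q1 \<in> cyc_open n i t \<and> q2 \<in> cyc_open n t i \<and>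
                  dist (p t) (p q1) > 1 \<and> dist (p t) (p q2) > 1)"
  shows "\<exists>i\<in>S. \<exists>j\<in>S. i \<noteq> j \<and>
           n_assigned \<A> \<phi> i = 1 \<and> n_assigned \<A> \<phi> j = 1 \<and>
           (\<forall>c\<in>S. n_assigned \<A> \<phi> c = 2 \<longrightarrow>
              (\<exists>A\<in>\<A>. \<exists>B\<in>\<A>. A \<noteq> B \<and> \<phi> A = c \<and> \<phi> B = c \<and>
                 A \<subseteq> cyc_open n i j \<and> B \<subseteq> cyc_open n j i))"
proof -
  interpret separable_assignment n p w S \<A> \<phi>
    using P wpos opt asg c1 c2 c3 by unfold_locales
  obtain i j where "decoupling_pair i j" using exists_decoupling_pair[OF two] by blast
  then show ?thesis unfolding decoupling_pair_def by blast
qed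

end
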